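(* For every $\alpha\in\Gamma$ and every perfect matching $g'$ of $\{1,\dots,N\}$, $$\mathbb P(\mathfrak g_\alpha=g',\ I_\alpha=1)=\mathbb P(\mathfrak g=g')\,p_\alpha=\frac{1}{(N-1)!!}\cdot\frac{1}{((N-1))_{e(\alpha)}};$$ equivalently $\mathcal L(\mathfrak g_\alpha\mid I_\alpha=1)=\mathcal L(\mathfrak g)$, and hence $\mathcal L(J_{\beta\alpha},\beta\in\Gamma\mid I_\alpha=1)=\mathcal L(I_\beta,\beta\in\Gamma)$.
   Context: Degree sequence $(d_1,\dots,d_n)$, $N=\sum d_i$ even, half-edges $1,\dots,N$ with $d_i$ of them belonging to vertex $v_i$ ($s\in v_i$). $\mathfrak g$ is a uniformly random perfect matching of $\{1,\dots,N\}$. Index sets: $\Gamma_{11}$ = sets $\{\{s,t\}\}$ with $s\in v_i,t\in v_j$, $i<j$, $d_i=d_j=1$; $\Gamma_{12}$ = sets $\{\{s,u\},\{t,v\}\}$ with $s\in v_i$, $t\in v_j$, $i<j$, $d_i=d_j=1$, $u\ne v\in v_k$, $d_k=2$; $\Gamma_{21}$ = sets $\{\{s,t\}\}$ with $s<t\in v_i$; $\Gamma_{22}$ = sets $\{\{s,u\},\{t,v\}\}$ with $s<t\in v_i$, $u\ne v\in v_j$, $i<j$; $\Gamma$ is their disjoint union. Each $\alpha\in\Gamma$ is a set of $e(\alpha)\in\{1,2\}$ disjoint pairs ("edges"); $I_\alpha=1$ iff all pairs of $\alpha$ belong to $\mathfrak g$; $p_\alpha=\mathbb EI_\alpha=1/((N-1))_{e(\alpha)}$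 with $((m))_r=m(m-2)\cdots(m-2r+2)$. Switching construction: write the pairs of $\alpha$ as $\{s_{\ell,1},s_{\ell,2}\}$, $\ell=1,\dots,e=e(\alpha)$, ordered so that $s_{1,1}\wedge s_{1,2}<\dots<s_{e,1}\wedge s_{e,2}$. Let $B_{\alpha,\ell}$ be uniform on $\{1,\dots,N-2(e-\ell)-1\}$, all $B_{\alpha,\ell}$ (over all $\alpha,\ell$) and $\mathfrak g$ independent. If $I_\alpha=0$ put $\mathfrak g_\alpha=\mathfrak g$. If $I_\alpha=1$, set $g_0=\mathfrak g$ and for $\ell=1,\dots,e$: let $t_{\ell,1}$ be the $B_{\alpha,\ell}$-th smallest element of $\{1,\dots,N\}\setminus(\{s_{\ell,1}\wedge s_{\ell,2}\}\cup\bigcup_{m>\ell}\{s_{m,1},s_{m,2}\})$, $t_{\ell,2}$ its partner in $g_{\ell-1}$, and $g_\ell=(g_{\ell-1}\setminus\{\{s_{\ell,1},s_{\ell,2}\},\{t_{\ell,1},t_{\ell,2}\}\})\cup\{\{s_{\ell,1}\wedge s_{\ell,2},t_{\ell,1}\},\{s_{\ell,1}\vee s_{\ell,2},t_{\ell,2}\}\}$ (so $g_\ell=g_{\ell-1}$ if $t_{\ell,1}=s_{\ell,1}\vee s_{\ell,2}$); put $\mathfrak g_\alpha=g_e$. Finally $J_{\beta\alpha}=1$ iff all pairs of $\beta$ belong to $\mathfrak g_\alpha$. *)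

theory Defs
  imports "HOL-Probability.Probability"
begin

text \<open>Half-edges are the numbers 1..N. A perfect matching is a set of 2-element
  subsets of {1..N} such that every half-edge lies in exactly one of them.\<close>
definition perfect_matching :: "nat \<Rightarrow> nat set set \<Rightarrow> bool" where
  "perfect_matching N g \<longleftrightarrow>
     (\<forall>p\<in>g. card p = 2 \<and> p \<subseteq> {1..N}) \<and> (\<forall>s\<in>{1..N}. \<exists>!p. p \<in> g \<and> s \<in> p)"

definition PM :: "nat \<Rightarrow> nat set set set" where
  "PM N = {g. perfect_matching N g}"

fun dfact :: "nat \<Rightarrow> nat" where
  "dfact 0 = 1"
| "dfact (Suc 0) = 1"
| "dfact (Suc (Suc k)) = Suc (Suc k) * dfact k"

definition ffact2 :: "nat \<Rightarrow> nat \<Rightarrow> nat" where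
  "ffact2 m r = (\<Prod>i<r. m - 2 * i)"

text \<open>Vertex structure: half-edge s (1 \<le> s \<le> N) belongs to vertex vx s;
  d i is the degree of vertex i.  Index sets Gamma_11, Gamma_12, Gamma_21, Gamma_22.\<close>
definition Gamma11 :: "nat \<Rightarrow> (nat \<Rightarrow> nat) \<Rightarrow> (nat \<Rightarrow> nat) \<Rightarrow> nat set set set" where
  "Gamma11 N d vx = {{{s,t}} | s t. s \<in> {1..N} \<and> t \<in> {1..N} \<and> vx s < vx t
                       \<and> d (vx s) = 1 \<and> d (vx t) = 1}"

definition Gamma12 :: "nat \<Rightarrow> (nat \<Rightarrow> nat) \<Rightarrow> (nat \<Rightarrow> nat) \<Rightarrow> nat set set set" where
  "Gamma12 N d vx = {{{s,u},{t,v}} | s t u v. s \<in> {1..N} \<and> t \<in> {1..N} \<and> u \<in> {1..N} \<and> v \<in> {1..N}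
                       \<and> vx s < vx t \<and> d (vx s) = 1 \<and> d (vx t) = 1
                       \<and> u \<noteq> v \<and> vx u = vx v \<and> d (vx u) = 2}"

definition Gamma21 :: "nat \<Rightarrow> (nat \<Rightarrow> nat) \<Rightarrow> (nat \<Rightarrow> nat) \<Rightarrow> nat set set set" where
  "Gamma21 N d vx = {{{s,t}} | s t. s \<in> {1..N} \<and> t \<in> {1..N} \<and> s < t \<and> vx s = vx t}"

definition Gamma22 :: "nat \<Rightarrow> (nat \<Rightarrow> nat) \<Rightarrow> (nat \<Rightarrow> nat) \<Rightarrow> nat set set set" where
  "Gamma22 N d vx = {{{s,u},{t,v}} | s t u v. s \<in> {1..N} \<and> t \<in> {1..N} \<and> u \<in> {1..N} \<and> v \<in> {1..N}
                       \<and> s < t \<and> vx s = vx t \<and> u \<noteq> v \<and> vx u = vx v \<and> vx s < vx u}"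

definition Gamma :: "nat \<Rightarrow> (nat \<Rightarrow> nat) \<Rightarrow> (nat \<Rightarrow> nat) \<Rightarrow> nat set set set" where
  "Gamma N d vx = Gamma11 N d vx \<union> Gamma12 N d vx \<union> Gamma21 N d vx \<union> Gamma22 N d vx"

text \<open>The k-th pair of alpha (0-indexed) in the order of increasing minima.\<close>
definition edge_at :: "nat set set \<Rightarrow> nat \<Rightarrow> nat set" where
  "edge_at \<alpha> k = (THE p. p \<in> \<alpha> \<and> Min p = sorted_list_of_set (Min ` \<alpha>) ! k)"

text \<open>One switching step (step number k+1 in the paper's 1-indexed notation), with
  random value b in {1..N-2(e-(k+1))-1}.\<close>
definition switch_step :: "nat \<Rightarrow> nat set set \<Rightarrow> nat set set \<Rightarrow> nat \<Rightarrow> nat \<Rightarrow> nat set set" where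
  "switch_step N \<alpha> g k b =
     (let p = edge_at \<alpha> k; a = Min p; c = Max p;
          avoid = {a} \<union> \<Union>{edge_at \<alpha> m | m. k < m \<and> m < card \<alpha>};
          t1 = sorted_list_of_set ({1..N} - avoid) ! (b - 1);
          t2 = (THE t. {t1, t} \<in> g)
      in (g - {{a, c}, {t1, t2}}) \<union> {{a, t1}, {c, t2}})"

definition switch :: "nat \<Rightarrow> nat set set \<Rightarrow> nat set set \<Rightarrow> nat list \<Rightarrow> nat set set" where
  "switch N \<alpha> g bs = foldl (\<lambda>h k. switch_step N \<alpha> h k (bs ! k)) g [0..<card \<alpha>]"

text \<open>The switched matching g_alpha (I_alpha = 1 iff alpha is contained in g).\<close>
definition g_alpha :: "nat \<Rightarrow> nat set set \<Rightarrow> nat set set \<Rightarrow> nat list \<Rightarrow> nat set set" where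
  "g_alpha N \<alpha> g bs = (if \<alpha> \<subseteq> g then switch N \<alpha> g bs else g)"

text \<open>Range of the independent uniform variables B_{alpha,1},...,B_{alpha,e}
  (list position k corresponds to l = k+1).\<close>
definition B_space :: "nat \<Rightarrow> nat \<Rightarrow> nat list set" where
  "B_space N e = {bs. length bs = e \<and> (\<forall>k<e. bs ! k \<in> {1..N - 2 * (e - Suc k) - 1})}"

definition joint :: "nat \<Rightarrow> nat set set \<Rightarrow> (nat set set \<times> nat list) pmf" where
  "joint N \<alpha> = pair_pmf (pmf_of_set (PM N)) (pmf_of_set (B_space N (card \<alpha>)))"

definition p_alpha :: "nat \<Rightarrow> nat set set \<Rightarrow> real" where
  "p_alpha N \<alpha> = measure_pmf.prob (pmf_of_set (PM N)) {g. \<alpha> \<subseteq> g}"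

end

theory Submission
  imports Defs
begin

(* Everything rests on one observation: for a pair {a, c} of a perfect matching g and a
  half-edge t outside a, replacing {a, c} and {t, t'} (t' the partner of t) by {a, t} and
  {c, t'} is undone by the same operation with the roles of c and t exchanged, and t is
  recovered as the new partner of a.  Hence, if E is a set of pairs avoiding a and c, this
  switch is a bijection from the matchings containing {a, c} and E, paired with the
  half-edges t outside a and outside the pairs of E, onto the matchings containing E.
  The switching g_alpha performs e such switches, the l-th one keeping the later pairs of
  alpha fixed and choosing t via B_(alpha,l); so (g, B) |-> g_alpha is a bijection from
  {g. alpha <= g} x B_space onto all perfect matchings.  Under the uniform law of (g, B)
  the event {alpha <= g} therefore carries the uniform law on perfect matchings, scaled
  by |{g. alpha <= g}| / |PM| = 1 / |B_space| = p_alpha, and |B_space| = ((N-1))_e.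
  A single switch with E empty also gives |PM_N| = (N-1) |PM_(N-2)|, whence
  |PM_N| = (N-1)!!. *)

section \<open>Perfect matchings of a finite set\<close>

definition perfect_matching_on :: "'a set \<Rightarrow> 'a set set \<Rightarrow> bool" where
  "perfect_matching_on S g \<longleftrightarrow>
     (\<forall>p\<in>g. card p = 2 \<and> p \<subseteq> S) \<and> (\<forall>s\<in>S. \<exists>!p. p \<in> g \<and> s \<in> p)"

lemma perfect_matching_onI:
  assumes "\<And>p. p \<in> g \<Longrightarrow> card p = 2 \<and> p \<subseteq> S" "\<And>s. s \<in> S \<Longrightarrow> \<exists>!p. p \<in> g \<and> s \<in> p"
  shows "perfect_matching_on S g"
  using assms unfolding perfect_matching_on_def by simp

lemma perfect_matching_iff_on: "perfect_matching N g \<longleftrightarrow> perfect_matching_on {1..N} g"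
  unfolding perfect_matching_def perfect_matching_on_def by simp

lemma PM_eq: "PM N = {g. perfect_matching_on {1..N} g}"
  unfolding PM_def perfect_matching_iff_on ..

context
  fixes S :: "'a set" and g :: "'a set set"
  assumes pm: "perfect_matching_on S g"
begin

lemma perfect_matching_on_card_edge: "p \<in> g \<Longrightarrow> card p = 2"
  using pm unfolding perfect_matching_on_def by auto

lemma perfect_matching_on_edge_subset: "p \<in> g \<Longrightarrow> p \<subseteq> S"
  using pm unfolding perfect_matching_on_def by auto

lemma perfect_matching_on_edge_unique: "p \<in> g \<Longrightarrow> q \<in> g \<Longrightarrow> s \<in> p \<Longrightarrow> s \<in> q \<Longrightarrow> p = q"
  using pm unfolding perfect_matching_on_def by (metis subsetD)

lemma perfect_matching_on_ex1: "s \<in> S \<Longrightarrow> \<exists>!p. p \<in> g \<and> s \<in> p"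
  using pm unfolding perfect_matching_on_def by simp

lemma perfect_matching_on_covers: "s \<in> S \<Longrightarrow> \<exists>p\<in>g. s \<in> p"
  using pm unfolding perfect_matching_on_def by blast

lemma perfect_matching_on_edge_neq: "{a, b} \<in> g \<Longrightarrow> a \<noteq> b"
  using perfect_matching_on_card_edge by fastforce

end

lemma perfect_matching_on_empty: "perfect_matching_on {} g \<longleftrightarrow> g = {}"
  unfolding perfect_matching_on_def by (auto dest: card_2_iff[THEN iffD1])

lemma perfect_matching_on_doubleton: "a \<noteq> c \<Longrightarrow> perfect_matching_on {a, c} {{a, c}}"
  unfolding perfect_matching_on_def by auto

lemma perfect_matching_on_Un:
  assumes g: "perfect_matching_on A g" and h: "perfect_matching_on B h" and "A \<inter> B = {}"
  shows "perfect_matching_on (A \<union> B) (g \<union> h)"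
proof (rule perfect_matching_onI)
  fix p assume "p \<in> g \<union> h"
  then show "card p = 2 \<and> p \<subseteq> A \<union> B"
    using g h unfolding perfect_matching_on_def by blast
next
  fix s assume "s \<in> A \<union> B"
  then consider "s \<in> A" "s \<notin> B" | "s \<in> B" "s \<notin> A"
    using assms(3) by blast
  then show "\<exists>!p. p \<in> g \<union> h \<and> s \<in> p"
  proof cases
    case 1
    then have "\<exists>!p. p \<in> g \<and> s \<in> p" "\<forall>q\<in>h. s \<notin> q"
      using perfect_matching_on_ex1[OF g] perfect_matching_on_edge_subset[OF h] by blast+
    then show ?thesis by (metis Un_iff)
  next
    case 2
    then have "\<exists>!p. p \<in> h \<and> s \<in> p" "\<forall>q\<in>g. s \<notin> q"
      using perfect_matching_on_ex1[OF h] perfect_matching_on_edge_subset[OF g] by blast+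
    then show ?thesis by (metis Un_iff)
  qed
qed

lemma perfect_matching_on_Diff:
  assumes pm: "perfect_matching_on S g" and "G \<subseteq> g"
  shows "perfect_matching_on (S - \<Union>G) (g - G)"
proof (rule perfect_matching_onI)
  fix p assume p: "p \<in> g - G"
  then have "p \<inter> \<Union>G = {}"
    using assms perfect_matching_on_edge_unique[OF pm] by blast
  then show "card p = 2 \<and> p \<subseteq> S - \<Union>G"
    using p perfect_matching_on_card_edge[OF pm] perfect_matching_on_edge_subset[OF pm] by blast
next
  fix s assume s: "s \<in> S - \<Union>G"
  then obtain p where p: "p \<in> g" "s \<in> p"
    using perfect_matching_on_covers[OF pm] by blast
  then have "p \<in> g - G"
    using s by blast
  then show "\<exists>!p. p \<in> g - G \<and> s \<in> p"
    using p perfect_matching_on_edge_unique[OF pm] by blast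
qed

section \<open>Switching one pair\<close>

definition partner :: "'a set set \<Rightarrow> 'a \<Rightarrow> 'a" where
  "partner g t = (THE u. {t, u} \<in> g)"

lemma partner_eqI:
  assumes pm: "perfect_matching_on S g" and tu: "{t, u} \<in> g"
  shows "partner g t = u"
  unfolding partner_def
proof (rule the_equality)
  fix v assume "{t, v} \<in> g"
  then have "{t, v} = {t, u}"
    using perfect_matching_on_edge_unique[OF pm _ tu] by blast
  moreover have "t \<noteq> u"
    using perfect_matching_on_edge_neq[OF pm tu] .
  ultimately show "v = u"
    by (metis doubleton_eq_iff)
qed (fact tu)

lemma partner_mem:
  assumes pm: "perfect_matching_on S g" and t: "t \<in> S"
  shows "{t, partner g t} \<in> g"
proof -
  obtain p where p: "p \<in> g" "t \<in> p"
    using perfect_matching_on_covers[OF pm t] by blast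
  then obtain u where "p = {t, u}"
    using perfect_matching_on_card_edge[OF pm] by (metis card_2_iff insert_commute insert_iff singletonD)
  then show ?thesis
    using partner_eqI[OF pm] p by simp
qed

text \<open>The step from g_(l-1) to g_l of the switching: a and c are the smaller and the larger
  element of the l-th pair of alpha, and t is t_(l,1).\<close>

definition switch_edge :: "'a \<Rightarrow> 'a \<Rightarrow> 'a set set \<Rightarrow> 'a \<Rightarrow> 'a set set" where
  "switch_edge a c g t = (g - {{a, c}, {t, partner g t}}) \<union> {{a, t}, {c, partner g t}}"

lemma perfect_matching_on_swap:
  assumes pm: "perfect_matching_on S g" and ac: "{a, c} \<in> g" and tu: "{t, u} \<in> g"
    and distinct: "t \<notin> {a, c}" "u \<notin> {a, c}"
  shows "perfect_matching_on S ((g - {{a, c}, {t, u}}) \<union> {{a, t}, {c, u}})"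
proof -
  have "a \<noteq> c" "t \<noteq> u"
    using perfect_matching_on_edge_neq[OF pm] ac tu by auto
  then have new: "perfect_matching_on {a, c, t, u} {{a, t}, {c, u}}"
    using perfect_matching_on_Un[OF perfect_matching_on_doubleton perfect_matching_on_doubleton, of a t c u]
      distinct by (auto simp: insert_commute)
  have "\<Union>{{a, c}, {t, u}} \<subseteq> S"
    using perfect_matching_on_edge_subset[OF pm] ac tu by blast
  then have "S - \<Union>{{a, c}, {t, u}} \<union> {a, c, t, u} = S"
    by auto
  then show ?thesis
    using perfect_matching_on_Un[OF perfect_matching_on_Diff[OF pm, of "{{a, c}, {t, u}}"] new]
      ac tu by auto
qed

lemma switch_edge_self:
  assumes pm: "perfect_matching_on S g" and ac: "{a, c} \<in> g"
  shows "switch_edge a c g c = g"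
proof -
  have "partner g c = a"
    using partner_eqI[OF pm, of c a] ac by (simp add: insert_commute)
  then show ?thesis
    unfolding switch_edge_def using ac by (auto simp: insert_commute)
qed

lemma switch_edge_other:
  assumes pm: "perfect_matching_on S g" and ac: "{a, c} \<in> g" and t: "t \<in> S" "t \<notin> {a, c}"
  shows "perfect_matching_on S (switch_edge a c g t)"
    and "{a, t} \<in> switch_edge a c g t"
    and "switch_edge a t (switch_edge a c g t) c = g"
proof -
  define u where "u = partner g t"
  have tu: "{t, u} \<in> g"
    unfolding u_def using partner_mem[OF pm t(1)] .
  have "{t, u} \<noteq> {a, c}"
    using t(2) by (auto simp: doubleton_eq_iff)
  then have u: "u \<notin> {a, c}"
    using perfect_matching_on_edge_unique[OF pm tu ac] by blast
  have switched: "switch_edge a c g t = (g - {{a, c}, {t, u}}) \<union> {{a, t}, {c, u}}"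
    unfolding switch_edge_def u_def ..
  show pm': "perfect_matching_on S (switch_edge a c g t)"
    unfolding switched using perfect_matching_on_swap[OF pm ac tu t(2) u] .
  show "{a, t} \<in> switch_edge a c g t"
    unfolding switched by blast
  have "partner (switch_edge a c g t) c = u"
    using partner_eqI[OF pm', of c u] switched by blast
  then have "switch_edge a t (switch_edge a c g t) c
      = (switch_edge a c g t - {{a, t}, {c, u}}) \<union> {{a, c}, {t, u}}"
    unfolding switch_edge_def[of a t] by simp
  also have "\<dots> = g"
  proof -
    have "{a, t} \<notin> g" "{c, u} \<notin> g"
      using perfect_matching_on_edge_unique[OF pm _ ac] t(2) u by (auto simp: doubleton_eq_iff)
    then show ?thesis
      unfolding switched using ac tu by auto
  qed
  finally show "switch_edge a t (switch_edge a c g t) c = g" .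
qed

lemma switch_edge:
  assumes pm: "perfect_matching_on S g" and ac: "{a, c} \<in> g" and t: "t \<in> S" "t \<noteq> a"
  shows "perfect_matching_on S (switch_edge a c g t)"
    and "{a, t} \<in> switch_edge a c g t"
    and "switch_edge a t (switch_edge a c g t) c = g"
  using switch_edge_self[OF pm ac] switch_edge_other[OF pm ac t(1)] t(2) pm ac
  by (cases "t = c"; simp)+

lemma switch_edge_keeps:
  assumes "E \<subseteq> g" "a \<notin> \<Union>E" "t \<notin> \<Union>E"
  shows "E \<subseteq> switch_edge a c g t"
proof
  fix p assume "p \<in> E"
  then have "p \<in> g" "a \<notin> p" "t \<notin> p"
    using assms by blast+
  then show "p \<in> switch_edge a c g t"
    unfolding switch_edge_def by auto
qed

lemma partner_notin_Union:
  assumes pm: "perfect_matching_on S h" and "E \<subseteq> h" "a \<in> S" "a \<notin> \<Union>E"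
  shows "partner h a \<notin> \<Union>E"
proof
  assume "partner h a \<in> \<Union>E"
  then obtain p where p: "p \<in> E" "partner h a \<in> p"
    by blast
  then have "p = {a, partner h a}"
    using perfect_matching_on_edge_unique[OF pm _ partner_mem[OF pm \<open>a \<in> S\<close>]] assms(2) by blast
  then show False
    using p(1) assms(4) by blast
qed

lemma switch_edge_at_partner:
  assumes pm: "perfect_matching_on S h" and E: "E \<subseteq> h"
    and a: "a \<in> S" "a \<notin> \<Union>E" and c: "c \<in> S" "c \<notin> \<Union>E" "c \<noteq> a"
  shows "perfect_matching_on S (switch_edge a (partner h a) h c)"
    and "insert {a, c} E \<subseteq> switch_edge a (partner h a) h c"
    and "partner h a \<in> S - \<Union>E - {a}"
    and "switch_edge a c (switch_edge a (partner h a) h c) (partner h a) = h"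
proof -
  have at: "{a, partner h a} \<in> h"
    using partner_mem[OF pm a(1)] .
  then have "partner h a \<in> S" "partner h a \<noteq> a"
    using perfect_matching_on_edge_subset[OF pm] perfect_matching_on_edge_neq[OF pm at] by auto
  then show "partner h a \<in> S - \<Union>E - {a}"
    using partner_notin_Union[OF pm E a] by blast
  note switched = switch_edge[OF pm at c(1,3)]
  show "perfect_matching_on S (switch_edge a (partner h a) h c)"
    and "switch_edge a c (switch_edge a (partner h a) h c) (partner h a) = h"
    using switched(1,3) .
  show "insert {a, c} E \<subseteq> switch_edge a (partner h a) h c"
    using switched(2) switch_edge_keeps[OF E a(2) c(2)] by blast
qed

lemma bij_betw_switch_edge:
  assumes a: "a \<in> S" "a \<notin> \<Union>E" and c: "c \<in> S" "c \<notin> \<Union>E" and "a \<noteq> c"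
  shows "bij_betw (\<lambda>(g, t). switch_edge a c g t)
           ({g. perfect_matching_on S g \<and> insert {a, c} E \<subseteq> g} \<times> (S - \<Union>E - {a}))
           {h. perfect_matching_on S h \<and> E \<subseteq> h}"
proof -
  let ?X = "{g. perfect_matching_on S g \<and> insert {a, c} E \<subseteq> g} \<times> (S - \<Union>E - {a})"
    and ?Y = "{h. perfect_matching_on S h \<and> E \<subseteq> h}"
    and ?f = "\<lambda>(g, t). switch_edge a c g t"
    and ?f' = "\<lambda>h. (switch_edge a (partner h a) h c, partner h a)"
  have forward: "perfect_matching_on S (switch_edge a c g t) \<and> E \<subseteq> switch_edge a c g t
      \<and> partner (switch_edge a c g t) a = t \<and> switch_edge a t (switch_edge a c g t) c = g"
    if pm: "perfect_matching_on S g" and sub: "insert {a, c} E \<subseteq> g"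
      and t: "t \<in> S" "t \<notin> \<Union>E" "t \<noteq> a" for g t
  proof -
    note switched = switch_edge[OF pm _ t(1,3)]
    then show ?thesis
      using sub switch_edge_keeps[OF _ a(2) t(2)] partner_eqI[OF switched(1,2)] by auto
  qed
  show ?thesis
  proof (rule bij_betw_byWitness[where f' = ?f'])
    show "\<forall>x\<in>?X. ?f' (?f x) = x"
    proof
      fix x assume "x \<in> ?X"
      then obtain g t where x: "x = (g, t)" "perfect_matching_on S g" "insert {a, c} E \<subseteq> g"
        "t \<in> S" "t \<notin> \<Union>E" "t \<noteq> a"
        by (cases x) auto
      then show "?f' (?f x) = x"
        using forward[OF x(2-6)] by simp
    qed
    show "?f ` ?X \<subseteq> ?Y"
    proof
      fix y assume "y \<in> ?f ` ?X"
      then obtain g t where y: "y = switch_edge a c g t" "perfect_matching_on S g"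
        "insert {a, c} E \<subseteq> g" "t \<in> S" "t \<notin> \<Union>E" "t \<noteq> a"
        by auto
      then show "y \<in> ?Y"
        using forward[OF y(2-6)] by simp
    qed
    show "\<forall>y\<in>?Y. ?f (?f' y) = y" "?f' ` ?Y \<subseteq> ?X"
      using switch_edge_at_partner[OF _ _ a c \<open>a \<noteq> c\<close>[symmetric]] by auto
  qed
qed

section \<open>Counting perfect matchings\<close>

lemma bij_betw_insert_edge:
  assumes "a \<in> S" "c \<in> S" "a \<noteq> c"
  shows "bij_betw (insert {a, c}) {g. perfect_matching_on (S - {a, c}) g}
           {h. perfect_matching_on S h \<and> {a, c} \<in> h}"
proof (rule bij_betw_byWitness[where f' = "\<lambda>h. h - {{a, c}}"])
  show "\<forall>g\<in>{g. perfect_matching_on (S - {a, c}) g}. insert {a, c} g - {{a, c}} = g"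
    using perfect_matching_on_edge_subset by fastforce
  show "\<forall>h\<in>{h. perfect_matching_on S h \<and> {a, c} \<in> h}. insert {a, c} (h - {{a, c}}) = h"
    by auto
  have "{a, c} \<union> (S - {a, c}) = S"
    using assms by auto
  then show "insert {a, c} ` {g. perfect_matching_on (S - {a, c}) g}
      \<subseteq> {h. perfect_matching_on S h \<and> {a, c} \<in> h}"
    using perfect_matching_on_Un[OF perfect_matching_on_doubleton[OF \<open>a \<noteq> c\<close>]] by fastforce
  show "(\<lambda>h. h - {{a, c}}) ` {h. perfect_matching_on S h \<and> {a, c} \<in> h}
      \<subseteq> {g. perfect_matching_on (S - {a, c}) g}"
    using perfect_matching_on_Diff[of S _ "{{a, c}}"] by auto
qed

lemma card_perfect_matchings_remove_edge:
  assumes "finite S" "a \<in> S" "c \<in> S" "a \<noteq> c"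
  shows "card {g. perfect_matching_on S g}
           = card {g. perfect_matching_on (S - {a, c}) g} * (card S - 1)"
proof -
  have "bij_betw (\<lambda>(g, t). switch_edge a c g t)
      ({g. perfect_matching_on S g \<and> {a, c} \<in> g} \<times> (S - {a})) {h. perfect_matching_on S h}"
    using bij_betw_switch_edge[of a S "{}" c] assms by simp
  then have "card {g. perfect_matching_on S g}
      = card ({g. perfect_matching_on S g \<and> {a, c} \<in> g} \<times> (S - {a}))"
    by (simp add: bij_betw_same_card)
  also have "\<dots> = card {g. perfect_matching_on S g \<and> {a, c} \<in> g} * (card S - 1)"
    using assms by (simp add: card_cartesian_product)
  also have "card {g. perfect_matching_on S g \<and> {a, c} \<in> g}
      = card {g. perfect_matching_on (S - {a, c}) g}"
    using bij_betw_same_card[OF bij_betw_insert_edge[OF assms(2-4)]] by simp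
  finally show ?thesis .
qed

lemma dfact_odd: "odd n \<Longrightarrow> dfact n = n * dfact (n - 2)"
  by (cases n rule: dfact.cases) auto

lemma dfact_pos: "dfact n > 0"
  by (induction n rule: dfact.induct) auto

lemma card_perfect_matchings:
  "finite S \<Longrightarrow> even (card S) \<Longrightarrow> card {g. perfect_matching_on S g} = dfact (card S - 1)"
proof (induction "card S" arbitrary: S rule: less_induct)
  case less
  show ?case
  proof (cases "S = {}")
    case True
    then have "{g. perfect_matching_on S g} = {{}}"
      using perfect_matching_on_empty by auto
    then show ?thesis
      using True by simp
  next
    case False
    then have "card S \<noteq> 0" "card S \<noteq> 1"
      using less.prems by auto
    then have "card S \<ge> 2"
      by linarith
    obtain a where a: "a \<in> S"
      using False by blast
    then have "S - {a} \<noteq> {}"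
      using \<open>card S \<ge> 2\<close> less.prems(1) card_Diff_singleton[OF a] by force
    then obtain c where c: "c \<in> S" "c \<noteq> a"
      by blast
    have card_rest: "card (S - {a, c}) = card S - 2"
      using a c less.prems(1) by (subst card_Diff_subset) auto
    then have "even (card (S - {a, c}))" "card (S - {a, c}) < card S"
      using less.prems(2) \<open>card S \<ge> 2\<close> by auto
    then have "card {g. perfect_matching_on (S - {a, c}) g} = dfact (card S - 1 - 2)"
      using less.hyps[of "S - {a, c}"] less.prems(1) card_rest by (simp add: numeral_3_eq_3)
    then show ?thesis
      using card_perfect_matchings_remove_edge[OF less.prems(1) a c(1) c(2)[symmetric]]
        \<open>card S \<ge> 2\<close> less.prems(2) dfact_odd[of "card S - 1"] by simp
  qed
qed

lemma card_PM: "even N \<Longrightarrow> card (PM N) = dfact (N - 1)"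
  unfolding PM_eq using card_perfect_matchings[of "{1..N}"] by simp

section \<open>Iterating bijections along a list of choices\<close>

definition dependent_lists :: "nat \<Rightarrow> (nat \<Rightarrow> 'a set) \<Rightarrow> 'a list set" where
  "dependent_lists n R = {xs. length xs = n \<and> (\<forall>k<n. xs ! k \<in> R k)}"

lemma bij_betw_snoc_dependent_lists:
  "bij_betw (\<lambda>(xs, x). xs @ [x]) (dependent_lists n R \<times> R n) (dependent_lists (Suc n) R)"
proof (rule bij_betw_byWitness[where f' = "\<lambda>xs. (butlast xs, last xs)"])
  show "\<forall>y\<in>dependent_lists n R \<times> R n.
      (butlast ((\<lambda>(xs, x). xs @ [x]) y), last ((\<lambda>(xs, x). xs @ [x]) y)) = y"
    by auto
  show "\<forall>xs\<in>dependent_lists (Suc n) R. (\<lambda>(xs, x). xs @ [x]) (butlast xs, last xs) = xs"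
    unfolding dependent_lists_def by (auto simp: snoc_eq_iff_butlast)
  show "(\<lambda>(xs, x). xs @ [x]) ` (dependent_lists n R \<times> R n) \<subseteq> dependent_lists (Suc n) R"
    unfolding dependent_lists_def by (auto simp: nth_append less_Suc_eq)
  show "(\<lambda>xs. (butlast xs, last xs)) ` dependent_lists (Suc n) R \<subseteq> dependent_lists n R \<times> R n"
    unfolding dependent_lists_def
    by (auto simp: nth_butlast last_conv_nth simp flip: length_greater_0_conv)
qed

lemma card_dependent_lists: "card (dependent_lists n R) = (\<Prod>k<n. card (R k))"
proof (induction n)
  case 0
  then show ?case
    by (simp add: dependent_lists_def)
next
  case (Suc n)
  then show ?case
    using bij_betw_same_card[OF bij_betw_snoc_dependent_lists[of n R]]
    by (simp add: card_cartesian_product)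
qed

lemma bij_betw_foldl_upt:
  assumes "\<And>k. k < n \<Longrightarrow> bij_betw (\<lambda>(x, b). f k x b) (X k \<times> R k) (X (Suc k))"
  shows "bij_betw (\<lambda>(x, bs). foldl (\<lambda>y k. f k y (bs ! k)) x [0..<n])
           (X 0 \<times> dependent_lists n R) (X n)"
  using assms
proof (induction n)
  case 0
  then show ?case
    by (intro bij_betw_byWitness[where f' = "\<lambda>x. (x, [])"]) (auto simp: dependent_lists_def)
next
  case (Suc n)
  let ?F = "\<lambda>n (x, bs). foldl (\<lambda>y k. f k y (bs ! k)) x [0..<n]"
  let ?snoc = "\<lambda>((x, bs), b). (x, bs @ [b])"
  have snoc: "bij_betw ?snoc ((X 0 \<times> dependent_lists n R) \<times> R n) (X 0 \<times> dependent_lists (Suc n) R)"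
  proof -
    have "bij_betw (\<lambda>((x, bs), b). (x, (bs, b))) ((X 0 \<times> dependent_lists n R) \<times> R n)
        (X 0 \<times> (dependent_lists n R \<times> R n))"
      by (rule bij_betw_byWitness[where f' = "\<lambda>(x, (bs, b)). ((x, bs), b)"]) auto
    from bij_betw_trans[OF this bij_betw_map_prod[OF bij_betw_id bij_betw_snoc_dependent_lists]]
    show ?thesis
      by (rule bij_betw_cong[THEN iffD1, rotated]) auto
  qed
  have prefix: "foldl (\<lambda>y k. f k y ((bs @ [b]) ! k)) x [0..<n] = ?F n (x, bs)"
    if "length bs = n" for x bs b
    using that by (auto simp: nth_append intro!: foldl_cong)
  have "bij_betw (?F n) (X 0 \<times> dependent_lists n R) (X n)"
    using Suc by simp
  then have "bij_betw ((\<lambda>(x, b). f n x b) \<circ> map_prod (?F n) id)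
      ((X 0 \<times> dependent_lists n R) \<times> R n) (X (Suc n))"
    using bij_betw_trans[OF bij_betw_map_prod[OF _ bij_betw_id] Suc.prems] by blast
  moreover have "?F (Suc n) (?snoc y) = ((\<lambda>(x, b). f n x b) \<circ> map_prod (?F n) id) y"
    if "y \<in> (X 0 \<times> dependent_lists n R) \<times> R n" for y
    using that prefix by (auto simp: dependent_lists_def)
  ultimately have "bij_betw (?F (Suc n) \<circ> ?snoc) ((X 0 \<times> dependent_lists n R) \<times> R n) (X (Suc n))"
    by (subst bij_betw_cong) auto
  then show ?case
    using bij_betw_comp_iff[OF snoc] by blast
qed

section \<open>The switching map\<close>

definition matching_on :: "'a set \<Rightarrow> 'a set set \<Rightarrow> bool" where
  "matching_on S \<alpha> \<longleftrightarrow> (\<forall>p\<in>\<alpha>. card p = 2 \<and> p \<subseteq> S) \<and> disjoint \<alpha>"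

lemma finite_matching_on: "finite S \<Longrightarrow> matching_on S \<alpha> \<Longrightarrow> finite \<alpha>"
  unfolding matching_on_def by (meson PowI finite_Pow_iff finite_subset subsetI)

lemma card_2_eq_Min_Max:
  fixes p :: "'a :: linorder set"
  assumes "card p = 2"
  shows "p = {Min p, Max p}" "Min p \<noteq> Max p"
proof -
  obtain x y where "p = {x, y}" "x \<noteq> y"
    using card_2_iff[THEN iffD1, OF assms] by blast
  moreover have "Min {x, y} = min x y" "Max {x, y} = max x y"
    by simp_all
  ultimately show "p = {Min p, Max p}" "Min p \<noteq> Max p"
    by (cases "x \<le> y"; simp add: min_absorb1 min_absorb2 max_absorb1 max_absorb2 insert_commute)+
qed

lemma inj_on_Min_matching:
  assumes "matching_on S (\<alpha> :: 'a :: linorder set set)"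
  shows "inj_on Min \<alpha>"
proof (rule inj_onI)
  fix p q assume pq: "p \<in> \<alpha>" "q \<in> \<alpha>" "Min p = Min q"
  then have "Min p \<in> p \<inter> q"
    using assms card_2_eq_Min_Max(1) unfolding matching_on_def by (metis IntI insertI1)
  then show "p = q"
    using assms pq(1,2) disjointD unfolding matching_on_def by blast
qed

lemma bij_betw_edge_at:
  assumes "matching_on S \<alpha>" "finite \<alpha>"
  shows "bij_betw (edge_at \<alpha>) {..<card \<alpha>} \<alpha>"
proof -
  have Min: "bij_betw Min \<alpha> (Min ` \<alpha>)"
    using inj_on_Min_matching[OF assms(1)] by (rule inj_on_imp_bij_betw)
  have "bij_betw ((!) (sorted_list_of_set (Min ` \<alpha>))) {..<card \<alpha>} (Min ` \<alpha>)"
  proof (rule bij_betw_nth)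
    show "{..<card \<alpha>} = {..<length (sorted_list_of_set (Min ` \<alpha>))}"
      using bij_betw_same_card[OF Min] by simp
  qed (use assms(2) in simp_all)
  from bij_betw_trans[OF this bij_betw_the_inv_into[OF Min]]
  show ?thesis
    unfolding edge_at_def the_inv_into_def comp_def .
qed

lemma card_Union_matching:
  assumes "matching_on S \<alpha>" "E \<subseteq> \<alpha>"
  shows "card (\<Union>E) = 2 * card E"
proof -
  have two: "card p = 2" if "p \<in> E" for p
    using assms that unfolding matching_on_def by blast
  have "finite p" if "p \<in> E" for p
    by (rule card_ge_0_finite) (simp add: two[OF that])
  moreover have "pairwise disjnt E"
    using assms pairwise_subset unfolding matching_on_def by blast
  ultimately have "card (\<Union>E) = sum card E"
    by (intro card_Union_disjoint)
  also have "\<dots> = 2 * card E"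
    using two by simp
  finally show ?thesis .
qed

lemma bij_betw_nth_sorted_list_of_set:
  assumes "finite T"
  shows "bij_betw (\<lambda>b. sorted_list_of_set T ! (b - 1)) {1..card T} T"
proof -
  have shift: "bij_betw (\<lambda>b. b - 1) {1..card T} {..<card T}"
    by (rule bij_betw_byWitness[where f' = Suc]) auto
  have nth: "bij_betw ((!) (sorted_list_of_set T)) {..<card T} T"
    by (rule bij_betw_nth) (use assms in simp_all)
  from bij_betw_trans[OF shift nth] show ?thesis
    by (simp add: comp_def)
qed

lemma switch_step_eq_switch_edge:
  "switch_step N \<alpha> g k b = switch_edge (Min (edge_at \<alpha> k)) (Max (edge_at \<alpha> k)) g
     (sorted_list_of_set ({1..N} - \<Union>(edge_at \<alpha> ` {Suc k..<card \<alpha>}) - {Min (edge_at \<alpha> k)}) ! (b - 1))"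
proof -
  have "{m. k < m \<and> m < card \<alpha>} = {Suc k..<card \<alpha>}"
    by auto
  then have "{1..N} - ({Min (edge_at \<alpha> k)} \<union> \<Union>{edge_at \<alpha> m | m. k < m \<and> m < card \<alpha>})
      = {1..N} - \<Union>(edge_at \<alpha> ` {Suc k..<card \<alpha>}) - {Min (edge_at \<alpha> k)}"
    by (auto simp only: Setcompr_eq_image)
  then show ?thesis
    unfolding switch_step_def switch_edge_def partner_def Let_def by simp
qed

lemma bij_betw_lessThan_split:
  assumes f: "bij_betw f {..<n} A" and k: "k < n"
  shows "f k \<in> A" "f k \<notin> f ` {Suc k..<n}" "f ` {Suc k..<n} \<subseteq> A"
    and "card (f ` {Suc k..<n}) = n - Suc k"
    and "f ` {k..<n} = insert (f k) (f ` {Suc k..<n})"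
proof -
  have inj: "inj_on f {..<n}"
    using f by (rule bij_betw_imp_inj_on)
  have tail: "{Suc k..<n} \<subseteq> {..<n}"
    by auto
  show "f k \<in> A" "f ` {Suc k..<n} \<subseteq> A"
    using f k by (auto dest: bij_betwE)
  show "f k \<notin> f ` {Suc k..<n}"
    using inj_on_image_mem_iff[OF inj _ tail] k by simp
  show "card (f ` {Suc k..<n}) = n - Suc k"
    using card_image[OF inj_on_subset[OF inj tail]] by simp
  have "{k..<n} = insert k {Suc k..<n}"
    using k by auto
  then show "f ` {k..<n} = insert (f k) (f ` {Suc k..<n})"
    by simp
qed

lemma card_Diff_Union_matching:
  assumes "matching_on S \<alpha>" "finite S" "E \<subseteq> \<alpha>" "a \<in> S" "a \<notin> \<Union>E"
  shows "card (S - \<Union>E - {a}) = card S - 2 * card E - 1"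
proof -
  have "\<Union>E \<subseteq> S"
    using assms(1,3) unfolding matching_on_def by blast
  then show ?thesis
    using assms card_Union_matching[OF assms(1,3)]
    by (simp add: card_Diff_subset finite_subset card_Diff_singleton)
qed

lemma bij_betw_switch_step:
  assumes \<alpha>: "matching_on {1..N} \<alpha>" and k: "k < card \<alpha>"
  shows "bij_betw (\<lambda>(g, b). switch_step N \<alpha> g k b)
           ({g. perfect_matching_on {1..N} g \<and> edge_at \<alpha> ` {k..<card \<alpha>} \<subseteq> g}
              \<times> {1..N - 2 * (card \<alpha> - Suc k) - 1})
           {g. perfect_matching_on {1..N} g \<and> edge_at \<alpha> ` {Suc k..<card \<alpha>} \<subseteq> g}"
proof -
  define p where "p = edge_at \<alpha> k"
  define E where "E = edge_at \<alpha> ` {Suc k..<card \<alpha>}"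
  define a where "a = Min p"
  define c where "c = Max p"
  define T where "T = {1..N} - \<Union>E - {a}"
  note split = bij_betw_lessThan_split[OF bij_betw_edge_at[OF \<alpha> finite_matching_on[OF _ \<alpha>]] k,
      folded p_def E_def]
  have "card p = 2" "p \<subseteq> {1..N}"
    using \<alpha> split(1) unfolding matching_on_def by auto
  then have p_eq: "p = {a, c}" and "a \<noteq> c" and ac: "a \<in> {1..N}" "c \<in> {1..N}"
    using card_2_eq_Min_Max unfolding a_def c_def by blast+
  have "p \<inter> q = {}" if "q \<in> E" for q
    using \<alpha> split(1-3) that disjointD unfolding matching_on_def by blast
  then have ac_E: "a \<notin> \<Union>E" "c \<notin> \<Union>E"
    using p_eq by auto
  have "card T = N - 2 * (card \<alpha> - Suc k) - 1"
    unfolding T_def using card_Diff_Union_matching[OF \<alpha> _ split(3) ac(1) ac_E(1)] split(4) by simp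
  then have "bij_betw (map_prod id (\<lambda>b. sorted_list_of_set T ! (b - 1)))
      ({g. perfect_matching_on {1..N} g \<and> insert {a, c} E \<subseteq> g} \<times> {1..N - 2 * (card \<alpha> - Suc k) - 1})
      ({g. perfect_matching_on {1..N} g \<and> insert {a, c} E \<subseteq> g} \<times> T)"
    using bij_betw_map_prod[OF bij_betw_id bij_betw_nth_sorted_list_of_set[of T]] T_def by simp
  from bij_betw_trans[OF this bij_betw_switch_edge[OF ac(1) ac_E(1) ac(2) ac_E(2) \<open>a \<noteq> c\<close>, folded T_def]]
  have "bij_betw (\<lambda>(g, b). switch_edge a c g (sorted_list_of_set T ! (b - 1)))
      ({g. perfect_matching_on {1..N} g \<and> insert {a, c} E \<subseteq> g} \<times> {1..N - 2 * (card \<alpha> - Suc k) - 1})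
      {h. perfect_matching_on {1..N} h \<and> E \<subseteq> h}"
    by (simp add: comp_def case_prod_beta')
  moreover have "edge_at \<alpha> ` {k..<card \<alpha>} = insert {a, c} E"
    using split(5) p_eq by simp
  ultimately show ?thesis
    unfolding switch_step_eq_switch_edge T_def a_def c_def p_def E_def by simp
qed

lemma bij_betw_switch:
  assumes "matching_on {1..N} \<alpha>"
  shows "bij_betw (\<lambda>(g, bs). switch N \<alpha> g bs) ({g \<in> PM N. \<alpha> \<subseteq> g} \<times> B_space N (card \<alpha>)) (PM N)"
proof -
  let ?X = "\<lambda>k. {g. perfect_matching_on {1..N} g \<and> edge_at \<alpha> ` {k..<card \<alpha>} \<subseteq> g}"
  let ?R = "\<lambda>k. {1..N - 2 * (card \<alpha> - Suc k) - 1}"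
  have "bij_betw (\<lambda>(g, bs). foldl (\<lambda>h k. switch_step N \<alpha> h k (bs ! k)) g [0..<card \<alpha>])
      (?X 0 \<times> dependent_lists (card \<alpha>) ?R) (?X (card \<alpha>))"
    by (rule bij_betw_foldl_upt) (rule bij_betw_switch_step[OF assms])
  moreover have "edge_at \<alpha> ` {0..<card \<alpha>} = \<alpha>"
    using bij_betw_edge_at[OF assms finite_matching_on[OF _ assms]]
    by (simp add: bij_betw_def atLeast0LessThan)
  ultimately show ?thesis
    unfolding switch_def PM_eq B_space_def dependent_lists_def by simp
qed

lemma card_B_space: "card (B_space N e) = ffact2 (N - 1) e"
proof -
  have "card (B_space N e) = (\<Prod>k<e. N - 1 - 2 * (e - Suc k))"
    unfolding B_space_def dependent_lists_def[symmetric] card_dependent_lists by simp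
  also have "\<dots> = ffact2 (N - 1) e"
    unfolding ffact2_def by (rule prod.nat_diff_reindex)
  finally show ?thesis .
qed

lemma matching_on_doubleton: "s \<noteq> t \<Longrightarrow> {s, t} \<subseteq> S \<Longrightarrow> matching_on S {{s, t}}"
  unfolding matching_on_def by simp

lemma matching_on_two_doubletons:
  "distinct [s, t, u, v] \<Longrightarrow> {s, t, u, v} \<subseteq> S \<Longrightarrow> matching_on S {{s, u}, {t, v}}"
  unfolding matching_on_def disjoint_def by auto

lemma matching_on_Gamma: "\<alpha> \<in> Gamma N d vx \<Longrightarrow> matching_on {1..N} \<alpha>"
  unfolding Gamma_def Gamma11_def Gamma12_def Gamma21_def Gamma22_def
  by (elim UnE; clarify; rule matching_on_doubleton matching_on_two_doubletons) auto

section \<open>The law of the switched matching\<close>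

lemma pair_pmf_of_set:
  assumes "finite A" "A \<noteq> {}" "finite B" "B \<noteq> {}"
  shows "pair_pmf (pmf_of_set A) (pmf_of_set B) = pmf_of_set (A \<times> B)"
proof (rule pmf_eqI)
  fix x :: "'a \<times> 'b"
  show "pmf (pair_pmf (pmf_of_set A) (pmf_of_set B)) x = pmf (pmf_of_set (A \<times> B)) x"
    using assms by (cases x) (simp add: pmf_pair card_cartesian_product indicator_def)
qed

lemma bij_betw_Collect:
  assumes "bij_betw f A B"
  shows "bij_betw f {x \<in> A. P (f x)} {y \<in> B. P y}"
proof (rule bij_betw_subset[OF assms])
  have "f ` {x \<in> A. P (f x)} = {y \<in> f ` A. P y}"
    by auto
  then show "f ` {x \<in> A. P (f x)} = {y \<in> B. P y}"
    using bij_betw_imp_surj_on[OF assms] by simp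
qed auto

context
  fixes N :: nat and \<alpha> :: "nat set set"
  assumes even: "even N" and \<alpha>: "matching_on {1..N} \<alpha>"
begin

lemma PM_finite_nonempty: "finite (PM N)" "PM N \<noteq> {}"
proof -
  have "card (PM N) > 0"
    using card_PM[OF even] dfact_pos by simp
  then show "finite (PM N)" "PM N \<noteq> {}"
    by (simp_all add: card_gt_0_iff)
qed

lemma card_PM_containing: "card {g \<in> PM N. \<alpha> \<subseteq> g} * card (B_space N (card \<alpha>)) = card (PM N)"
  using bij_betw_same_card[OF bij_betw_switch[OF \<alpha>]] by (simp add: card_cartesian_product)

lemma B_space_finite_nonempty: "finite (B_space N (card \<alpha>))" "B_space N (card \<alpha>) \<noteq> {}"
proof -
  have "card (PM N) > 0"
    using PM_finite_nonempty by (simp add: card_gt_0_iff)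
  then have "card (B_space N (card \<alpha>)) > 0"
    using card_PM_containing by (metis gr0I mult_0_right)
  then show "finite (B_space N (card \<alpha>))" "B_space N (card \<alpha>) \<noteq> {}"
    by (simp_all add: card_gt_0_iff)
qed

lemma p_alpha_eq: "p_alpha N \<alpha> = 1 / card (B_space N (card \<alpha>))"
proof -
  have "p_alpha N \<alpha> = card {g \<in> PM N. \<alpha> \<subseteq> g} / card (PM N)"
    unfolding p_alpha_def using PM_finite_nonempty by (simp add: measure_pmf_of_set Int_def)
  also have "\<dots> = 1 / card (B_space N (card \<alpha>))"
  proof -
    have "real (card {g \<in> PM N. \<alpha> \<subseteq> g}) * real (card (B_space N (card \<alpha>))) = real (card (PM N))"
      using card_PM_containing of_nat_mult by metis
    moreover have "card (B_space N (card \<alpha>)) > 0" "card (PM N) > 0"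
      using B_space_finite_nonempty PM_finite_nonempty by (simp_all add: card_gt_0_iff)
    ultimately show ?thesis
      by (simp add: divide_simps)
  qed
  finally show ?thesis .
qed

lemma measure_switched_event:
  "measure_pmf.prob (joint N \<alpha>) {(g, bs). \<alpha> \<subseteq> g \<and> Q (g_alpha N \<alpha> g bs)}
     = measure_pmf.prob (pmf_of_set (PM N)) {g. Q g} * p_alpha N \<alpha>"
proof -
  let ?B = "B_space N (card \<alpha>)" and ?f = "\<lambda>(g, bs). switch N \<alpha> g bs"
  have joint: "joint N \<alpha> = pmf_of_set (PM N \<times> ?B)"
    unfolding joint_def using PM_finite_nonempty B_space_finite_nonempty by (rule pair_pmf_of_set)
  have "(PM N \<times> ?B) \<inter> {(g, bs). \<alpha> \<subseteq> g \<and> Q (g_alpha N \<alpha> g bs)}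
      = {x \<in> {g \<in> PM N. \<alpha> \<subseteq> g} \<times> ?B. Q (?f x)}"
    by (auto simp: g_alpha_def)
  moreover have "bij_betw ?f {x \<in> {g \<in> PM N. \<alpha> \<subseteq> g} \<times> ?B. Q (?f x)} {h \<in> PM N. Q h}"
    using bij_betw_Collect[OF bij_betw_switch[OF \<alpha>]] .
  ultimately have "card ((PM N \<times> ?B) \<inter> {(g, bs). \<alpha> \<subseteq> g \<and> Q (g_alpha N \<alpha> g bs)})
      = card {h \<in> PM N. Q h}"
    by (simp add: bij_betw_same_card)
  then have "measure_pmf.prob (joint N \<alpha>) {(g, bs). \<alpha> \<subseteq> g \<and> Q (g_alpha N \<alpha> g bs)}
      = card {h \<in> PM N. Q h} / (card (PM N) * card ?B)"
    unfolding joint using PM_finite_nonempty B_space_finite_nonempty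
    by (simp add: measure_pmf_of_set card_cartesian_product)
  moreover have "measure_pmf.prob (pmf_of_set (PM N)) {g. Q g} = card {h \<in> PM N. Q h} / card (PM N)"
    using PM_finite_nonempty by (simp add: measure_pmf_of_set Int_def)
  ultimately show ?thesis
    unfolding p_alpha_eq by simp
qed

end

theorem proposition4p2:
  fixes n N :: nat and d vx :: "nat \<Rightarrow> nat" and \<alpha> g' :: "nat set set"
  assumes "N = (\<Sum>i=1..n. d i)"
    and "even N"
    and "\<forall>s\<in>{1..N}. vx s \<in> {1..n}"
    and "\<forall>i\<in>{1..n}. card {s\<in>{1..N}. vx s = i} = d i"
    and "\<alpha> \<in> Gamma N d vx"
    and "perfect_matching N g'"
  shows "measure_pmf.prob (joint N \<alpha>) {(g, bs). g_alpha N \<alpha> g bs = g' \<and> \<alpha> \<subseteq> g}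
           = measure_pmf.prob (pmf_of_set (PM N)) {g'} * p_alpha N \<alpha>
       \<and> measure_pmf.prob (pmf_of_set (PM N)) {g'} * p_alpha N \<alpha>
           = 1 / real (dfact (N - 1)) * (1 / real (ffact2 (N - 1) (card \<alpha>)))
       \<and> (\<forall>x :: nat set set \<Rightarrow> bool.
            measure_pmf.prob (joint N \<alpha>)
              {(g, bs). \<alpha> \<subseteq> g \<and> (\<forall>\<beta>\<in>Gamma N d vx. (\<beta> \<subseteq> g_alpha N \<alpha> g bs) = x \<beta>)}
            = measure_pmf.prob (pmf_of_set (PM N)) {g. \<forall>\<beta>\<in>Gamma N d vx. (\<beta> \<subseteq> g) = x \<beta>}
              * p_alpha N \<alpha>)"
proof (intro conjI allI)
  \<comment> \<open>The degree data enter only through Gamma: the switching needs nothing but that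
    alpha is a set of disjoint pairs.\<close>
  have \<alpha>: "matching_on {1..N} \<alpha>"
    using assms(5) by (rule matching_on_Gamma)
  note switched = measure_switched_event[OF assms(2) \<alpha>]
  have "{(g, bs). g_alpha N \<alpha> g bs = g' \<and> \<alpha> \<subseteq> g} = {(g, bs). \<alpha> \<subseteq> g \<and> g_alpha N \<alpha> g bs = g'}"
    by blast
  then show "measure_pmf.prob (joint N \<alpha>) {(g, bs). g_alpha N \<alpha> g bs = g' \<and> \<alpha> \<subseteq> g}
      = measure_pmf.prob (pmf_of_set (PM N)) {g'} * p_alpha N \<alpha>"
    using switched[of "\<lambda>h. h = g'"] by simp
  have "g' \<in> PM N"
    using assms(6) by (simp add: PM_def)
  then have "measure_pmf.prob (pmf_of_set (PM N)) {g'} = 1 / dfact (N - 1)"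
    using PM_finite_nonempty[OF assms(2) \<alpha>] card_PM[OF assms(2)] by (simp add: measure_pmf_of_set)
  then show "measure_pmf.prob (pmf_of_set (PM N)) {g'} * p_alpha N \<alpha>
      = 1 / real (dfact (N - 1)) * (1 / real (ffact2 (N - 1) (card \<alpha>)))"
    using p_alpha_eq[OF assms(2) \<alpha>] card_B_space by simp
  fix x :: "nat set set \<Rightarrow> bool"
  show "measure_pmf.prob (joint N \<alpha>)
      {(g, bs). \<alpha> \<subseteq> g \<and> (\<forall>\<beta>\<in>Gamma N d vx. (\<beta> \<subseteq> g_alpha N \<alpha> g bs) = x \<beta>)}
    = measure_pmf.prob (pmf_of_set (PM N)) {g. \<forall>\<beta>\<in>Gamma N d vx. (\<beta> \<subseteq> g) = x \<beta>} * p_alpha N \<alpha>"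
    by (rule switched)
qed

end
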